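(* Let $P$ and $Q$ be finite posets with height functions $g$ and $h$ respectively. Give $P\times Q$ (product order) the height function $(a,b)\mapsto g(a)+h(b)$, and the disjoint union $P\sqcup Q$ the height function $g\sqcup h$ equal to $g$ on $P$ and $h$ on $Q$. Then $\mathsf{Z}_{P\times Q,g+h}=\mathsf{Z}_{P,g}\,\mathsf{Z}_{Q,h}$ and $\mathsf{Z}_{P\sqcup Q,g\sqcup h}=\mathsf{Z}_{P,g}+\mathsf{Z}_{Q,h}$.
   Context: $q$ is an indeterminate; $[n]_q=(q^n-1)/(q-1)$. A height function on a finite poset $R$ is $h:R\to\mathbb{N}$ with $h(x)<h(y)$ whenever $y$ covers $x$. The $q$-Zeta polynomial $\mathsf{Z}_{R,h}\in\mathbb{Q}(q)[x]$ is the unique polynomial with $\mathsf{Z}_{R,h}([n]_q)=\sum_{e_1\le\cdots\le e_{n-1}\text{ in }R}q^{h(e_1)+\cdots+h(e_{n-1})}$ for all integers $n\ge2$ (such a polynomial exists). *)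

theory Defs
  imports "HOL-Computational_Algebra.Polynomial" "HOL-Computational_Algebra.Fraction_Field"
    "HOL-Library.FuncSet"
begin

type_synonym qfield = "rat poly fract"

definition qvar :: qfield where
  "qvar = Fract [:0, 1:] 1"

definition qint :: "nat \<Rightarrow> qfield" where
  "qint n = (qvar ^ n - 1) / (qvar - 1)"

definition finite_poset :: "'a set \<Rightarrow> ('a \<Rightarrow> 'a \<Rightarrow> bool) \<Rightarrow> bool" where
  "finite_poset A le \<longleftrightarrow> finite A \<and>
     (\<forall>x\<in>A. le x x) \<and>
     (\<forall>x\<in>A. \<forall>y\<in>A. le x y \<and> le y x \<longrightarrow> x = y) \<and>
     (\<forall>x\<in>A. \<forall>y\<in>A. \<forall>z\<in>A. le x y \<and> le y z \<longrightarrow> le x z)"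

definition covers :: "'a set \<Rightarrow> ('a \<Rightarrow> 'a \<Rightarrow> bool) \<Rightarrow> 'a \<Rightarrow> 'a \<Rightarrow> bool" where
  "covers A le y x \<longleftrightarrow> x \<in> A \<and> y \<in> A \<and> le x y \<and> x \<noteq> y \<and>
     \<not> (\<exists>z\<in>A. le x z \<and> le z y \<and> z \<noteq> x \<and> z \<noteq> y)"

definition height_function :: "'a set \<Rightarrow> ('a \<Rightarrow> 'a \<Rightarrow> bool) \<Rightarrow> ('a \<Rightarrow> nat) \<Rightarrow> bool" where
  "height_function A le h \<longleftrightarrow> (\<forall>x\<in>A. \<forall>y\<in>A. covers A le y x \<longrightarrow> h x < h y)"

definition multichains :: "'a set \<Rightarrow> ('a \<Rightarrow> 'a \<Rightarrow> bool) \<Rightarrow> nat \<Rightarrow> (nat \<Rightarrow> 'a) set" where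
  "multichains A le m = {e \<in> {..<m} \<rightarrow>\<^sub>E A. \<forall>i. Suc i < m \<longrightarrow> le (e i) (e (Suc i))}"

definition chain_gen :: "'a set \<Rightarrow> ('a \<Rightarrow> 'a \<Rightarrow> bool) \<Rightarrow> ('a \<Rightarrow> nat) \<Rightarrow> nat \<Rightarrow> qfield" where
  "chain_gen A le h n = (\<Sum>e\<in>multichains A le (n - 1). qvar ^ (\<Sum>i<n - 1. h (e i)))"

definition qZeta :: "'a set \<Rightarrow> ('a \<Rightarrow> 'a \<Rightarrow> bool) \<Rightarrow> ('a \<Rightarrow> nat) \<Rightarrow> qfield poly" where
  "qZeta A le h = (THE Z. \<forall>n\<ge>2. poly Z (qint n) = chain_gen A le h n)"

definition prod_le :: "('a \<Rightarrow> 'a \<Rightarrow> bool) \<Rightarrow> ('b \<Rightarrow> 'b \<Rightarrow> bool) \<Rightarrow> 'a \<times> 'b \<Rightarrow> 'a \<times> 'b \<Rightarrow> bool" where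
  "prod_le le1 le2 x y \<longleftrightarrow> le1 (fst x) (fst y) \<and> le2 (snd x) (snd y)"

fun sum_le :: "('a \<Rightarrow> 'a \<Rightarrow> bool) \<Rightarrow> ('b \<Rightarrow> 'b \<Rightarrow> bool) \<Rightarrow> 'a + 'b \<Rightarrow> 'a + 'b \<Rightarrow> bool" where
  "sum_le le1 le2 (Inl a) (Inl a') = le1 a a'"
| "sum_le le1 le2 (Inr b) (Inr b') = le2 b b'"
| "sum_le le1 le2 _ _ = False"

end

theory Submission
  imports Defs
begin

(* Write M_A(m) for the q-weighted number of multichains of length m in A, so that
   Z([n]_q) = M(n - 1).  Splitting off the last element y of a multichain gives
   M_A(m + 1) = sum over y in A of q^(h y) M_{A,<=y}(m).  On a down-set {z. z <= x} the
   term y = x reproduces the same sequence, so M_{<=x}(m + 1) = q^(h x) M_{<=x}(m) plus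
   terms for y < x; as h is strictly increasing along the order, induction on h x shows
   that M_{<=x} is a linear combination of the geometric sequences q^(s m) with s <= h x.
   Since q^m is a linear polynomial in [m + 2]_q, such a sequence is interpolated by a
   polynomial, which is unique because the [n]_q are pairwise distinct.  Both identities
   thus reduce to M_{PxQ} = M_P M_Q (a multichain in P x Q is a pair of multichains) and
   M_{P+Q} = M_P + M_Q for m > 0 (a nonempty multichain in P + Q stays in one summand). *)

lemma qvar_power: "qvar ^ n = Fract ([:0, 1:] ^ n) 1"
  by (induction n) (simp_all add: qvar_def One_fract_def)

lemma qvar_power_eq_iff: "qvar ^ m = qvar ^ n \<longleftrightarrow> m = n"
proof
  assume "qvar ^ m = qvar ^ n"
  then have "degree ([:0, 1:] ^ m :: rat poly) = degree ([:0, 1:] ^ n :: rat poly)"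
    by (simp add: qvar_power eq_fract)
  then show "m = n"
    using degree_linear_power[of "0 :: rat"] by simp
qed simp

lemma qvar_nonzero: "qvar \<noteq> 0"
  using qvar_power_eq_iff[of 1 2] by auto

lemma qvar_power_qint: "qvar ^ n = (qvar - 1) * qint n + 1"
  using qvar_power_eq_iff[of 1 0] by (simp add: qint_def)

lemma inj_qint: "inj qint"
  by (rule injI) (metis qvar_power_qint qvar_power_eq_iff)

lemma poly_eq_on_qints:
  assumes "\<And>n. n \<ge> 2 \<Longrightarrow> poly p (qint n) = poly r (qint n)"
  shows "p = r"
proof (rule ccontr)
  assume "p \<noteq> r"
  then have "finite {x. poly (p - r) x = 0}"
    by (intro poly_roots_finite) simp
  moreover have "qint ` {2..} \<subseteq> {x. poly (p - r) x = 0}"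
    using assms by auto
  moreover have "inj_on qint {2..}"
    using inj_qint by (rule inj_on_subset) simp
  then have "infinite (qint ` {2..})"
    by (simp add: finite_image_iff infinite_Ici)
  ultimately show False
    using finite_subset by blast
qed

lemma qZeta_eqI:
  assumes "\<And>n. n \<ge> 2 \<Longrightarrow> poly Z (qint n) = chain_gen A le h n"
  shows "qZeta A le h = Z"
  unfolding qZeta_def
  using assms poly_eq_on_qints by (intro the_equality) auto

definition qexp_poly :: "nat \<Rightarrow> (nat \<Rightarrow> qfield) \<Rightarrow> bool" where
  "qexp_poly R f \<longleftrightarrow> (\<exists>c. \<forall>m. f m = (\<Sum>s<R. c s * qvar ^ (s * m)))"

lemma qexp_polyI: "(\<And>m. f m = (\<Sum>s<R. c s * qvar ^ (s * m))) \<Longrightarrow> qexp_poly R f"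
  unfolding qexp_poly_def by blast

lemma qexp_poly_zero: "qexp_poly R (\<lambda>_. 0)"
  by (rule qexp_polyI[where c = "\<lambda>_. 0"]) simp

lemma qexp_poly_mono:
  assumes "qexp_poly R f" and "R \<le> R'"
  shows "qexp_poly R' f"
proof -
  obtain c where c: "\<And>m. f m = (\<Sum>s<R. c s * qvar ^ (s * m))"
    using assms(1) unfolding qexp_poly_def by blast
  have "f m = (\<Sum>s<R'. (if s < R then c s else 0) * qvar ^ (s * m))" for m
    unfolding c using assms(2)
    by (intro sum.mono_neutral_cong_left) auto
  then show ?thesis
    by (rule qexp_polyI)
qed

lemma qexp_poly_add:
  assumes "qexp_poly R f" and "qexp_poly R g"
  shows "qexp_poly R (\<lambda>m. f m + g m)"
proof -
  obtain c d where "\<And>m. f m = (\<Sum>s<R. c s * qvar ^ (s * m))"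
    and "\<And>m. g m = (\<Sum>s<R. d s * qvar ^ (s * m))"
    using assms unfolding qexp_poly_def by blast
  then show ?thesis
    by (intro qexp_polyI[where c = "\<lambda>s. c s + d s"]) (simp add: sum.distrib distrib_right)
qed

lemma qexp_poly_cmult:
  assumes "qexp_poly R f"
  shows "qexp_poly R (\<lambda>m. a * f m)"
proof -
  obtain c where "\<And>m. f m = (\<Sum>s<R. c s * qvar ^ (s * m))"
    using assms unfolding qexp_poly_def by blast
  then show ?thesis
    by (intro qexp_polyI[where c = "\<lambda>s. a * c s"]) (simp add: sum_distrib_left mult.assoc)
qed

lemma qexp_poly_sum:
  assumes "\<And>x. x \<in> X \<Longrightarrow> qexp_poly R (f x)"
  shows "qexp_poly R (\<lambda>m. \<Sum>x\<in>X. f x m)"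
  using assms
  by (induction X rule: infinite_finite_induct) (auto intro: qexp_poly_zero qexp_poly_add)

lemma qexp_poly_recurrence:
  assumes "qexp_poly R g" and rec: "\<And>m. f (Suc m) = qvar ^ R * f m + g m"
  shows "qexp_poly (Suc R) f"
proof -
  obtain c where c: "\<And>m. g m = (\<Sum>s<R. c s * qvar ^ (s * m))"
    using assms(1) unfolding qexp_poly_def by blast
  define d where "d s = c s / (qvar ^ s - qvar ^ R)" for s
  define \<alpha> where "\<alpha> = f 0 - (\<Sum>s<R. d s)"
  have d: "d s * qvar ^ (s * Suc m) = qvar ^ R * (d s * qvar ^ (s * m)) + c s * qvar ^ (s * m)"
    if "s < R" for s m
  proof -
    have "qvar ^ s - qvar ^ R \<noteq> 0"
      using that qvar_power_eq_iff[of s R] by simp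
    then have "d s * qvar ^ s = qvar ^ R * d s + c s"
      unfolding d_def by (simp add: field_simps)
    then have "d s * qvar ^ s * qvar ^ (s * m) = (qvar ^ R * d s + c s) * qvar ^ (s * m)"
      by simp
    then show ?thesis
      by (simp add: power_add algebra_simps)
  qed
  have closed_form: "f m = \<alpha> * qvar ^ (R * m) + (\<Sum>s<R. d s * qvar ^ (s * m))" for m
  proof (induction m)
    case 0
    then show ?case
      by (simp add: \<alpha>_def)
  next
    case (Suc m)
    have "f (Suc m) = \<alpha> * qvar ^ (R * Suc m)
        + (\<Sum>s<R. qvar ^ R * (d s * qvar ^ (s * m)) + c s * qvar ^ (s * m))"
      by (simp add: rec Suc.IH c sum.distrib sum_distrib_left algebra_simps power_add)
    also have "\<dots> = \<alpha> * qvar ^ (R * Suc m) + (\<Sum>s<R. d s * qvar ^ (s * Suc m))"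
      using d by simp
    finally show ?case .
  qed
  show ?thesis
    by (rule qexp_polyI[where c = "\<lambda>s. if s = R then \<alpha> else d s"])
      (simp add: closed_form sum.lessThan_Suc mult.commute[of R])
qed

lemma qexp_poly_interpolation:
  assumes "qexp_poly R f"
  shows "\<exists>Z. \<forall>m. poly Z (qint (Suc (Suc m))) = f m"
proof -
  obtain c where c: "\<And>m. f m = (\<Sum>s<R. c s * qvar ^ (s * m))"
    using assms unfolding qexp_poly_def by blast
  define L where "L = smult (1 / qvar ^ 2) [:1, qvar - 1:]"
  have "poly L (qint n) = qvar ^ n / qvar ^ 2" for n
    unfolding qvar_power_qint[of n] using qvar_nonzero by (simp add: L_def field_simps)
  then have L: "poly L (qint (Suc (Suc m))) = qvar ^ m" for m
    using qvar_nonzero by (simp add: power2_eq_square)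
  have "poly (\<Sum>s<R. smult (c s) (L ^ s)) (qint (Suc (Suc m))) = f m" for m
    by (simp add: poly_sum L c power_mult mult.commute[of _ m])
  then show ?thesis
    by blast
qed

lemma finite_poset_iff:
  "finite_poset A le \<longleftrightarrow> finite A \<and> reflp_on A le \<and> antisymp_on A le \<and> transp_on A le"
  unfolding finite_poset_def reflp_on_def antisymp_on_def transp_on_def by blast

lemma height_function_strict_mono:
  assumes "finite_poset P le" and "height_function P le h"
    and "x \<in> P" and "y \<in> P" and "le x y" and "x \<noteq> y"
  shows "h x < h y"
  using assms(3-)
proof (induction "card {z \<in> P. le x z \<and> le z y}" arbitrary: x y rule: less_induct)
  case less
  have fin: "finite P" and refl: "reflp_on P le" and antisym: "antisymp_on P le"
    and trans: "transp_on P le"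
    using assms(1) by (auto simp: finite_poset_iff)
  show ?case
  proof (cases "covers P le y x")
    case True
    then show ?thesis
      using assms(2) less.prems unfolding height_function_def by blast
  next
    case False
    then obtain z where z: "z \<in> P" "le x z" "le z y" "z \<noteq> x" "z \<noteq> y"
      using less.prems unfolding covers_def by blast
    have "{w \<in> P. le x w \<and> le w z} \<subset> {w \<in> P. le x w \<and> le w y}"
      using z less.prems reflp_onD[OF refl] antisymp_onD[OF antisym, of y z]
        transp_onD[OF trans, of _ z y] by blast
    moreover have "{w \<in> P. le z w \<and> le w y} \<subset> {w \<in> P. le x w \<and> le w y}"
      using z less.prems reflp_onD[OF refl] antisymp_onD[OF antisym, of x z]
        transp_onD[OF trans, of x z] by blast
    ultimately have "h x < h z" and "h z < h y"
      using z less.prems fin by (auto intro!: less.hyps psubset_card_mono)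
    then show ?thesis
      by simp
  qed
qed

definition multichain_gen ::
    "'a set \<Rightarrow> ('a \<Rightarrow> 'a \<Rightarrow> bool) \<Rightarrow> ('a \<Rightarrow> nat) \<Rightarrow> nat \<Rightarrow> qfield" where
  "multichain_gen A le h m = (\<Sum>e\<in>multichains A le m. qvar ^ (\<Sum>i<m. h (e i)))"

lemma chain_gen_eq_multichain_gen: "chain_gen A le h n = multichain_gen A le h (n - 1)"
  by (simp add: chain_gen_def multichain_gen_def)

lemma finite_multichains: "finite A \<Longrightarrow> finite (multichains A le m)"
  unfolding multichains_def by (rule finite_subset[OF _ finite_PiE[of "{..<m}" "\<lambda>_. A"]]) auto

lemma multichain_le:
  assumes "transp_on A le" and e: "e \<in> multichains A le n" and "i < j" and "j < n"
  shows "le (e i) (e j)"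
  using assms(3,4)
proof (induction j)
  case 0
  then show ?case
    by simp
next
  case (Suc j)
  have step: "le (e j) (e (Suc j))" and "e i \<in> A" "e j \<in> A" "e (Suc j) \<in> A"
    using e Suc.prems by (auto simp: multichains_def)
  show ?case
  proof (cases "i = j")
    case False
    with Suc have "le (e i) (e j)"
      by simp
    with step show ?thesis
      using transp_onD[OF assms(1)] \<open>e i \<in> A\<close> \<open>e j \<in> A\<close> \<open>e (Suc j) \<in> A\<close> by blast
  qed (use step in simp)
qed

lemma multichain_gen_Suc:
  assumes "finite A" and "transp_on A le"
  shows "multichain_gen A le h (Suc m)
    = (\<Sum>y\<in>A. qvar ^ h y * multichain_gen {z \<in> A. le z y} le h m)"
proof -
  let ?S = "SIGMA y:A. multichains {z \<in> A. le z y} le m"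
  let ?ext = "\<lambda>(y, e). e(m := y)" and ?cut = "\<lambda>e. (e m, restrict e {..<m})"
  have "(\<Sum>y\<in>A. qvar ^ h y * multichain_gen {z \<in> A. le z y} le h m)
      = (\<Sum>(y, e)\<in>?S. qvar ^ (h y + (\<Sum>i<m. h (e i))))"
    unfolding multichain_gen_def sum_distrib_left power_add
    by (rule sum.Sigma) (auto simp: assms(1) finite_multichains)
  also have "\<dots> = multichain_gen A le h (Suc m)"
    unfolding multichain_gen_def
  proof (rule sum.reindex_bij_witness[where i = ?cut and j = ?ext])
    fix ye assume "ye \<in> ?S"
    then obtain y e where ye: "ye = (y, e)" "y \<in> A" "e \<in> multichains {z \<in> A. le z y} le m"
      by blast
    then have "e \<in> {..<m} \<rightarrow>\<^sub>E {z \<in> A. le z y}"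
      by (simp add: multichains_def)
    with ye show "?cut (?ext ye) = ye"
      by simp
    show "?ext ye \<in> multichains A le (Suc m)"
      using ye by (auto simp: multichains_def PiE_iff extensional_def less_Suc_eq)
    show "qvar ^ (\<Sum>i<Suc m. h (?ext ye i)) = (\<lambda>(y, e). qvar ^ (h y + (\<Sum>i<m. h (e i)))) ye"
      using ye by (simp add: add.commute)
  next
    fix e assume e: "e \<in> multichains A le (Suc m)"
    then have "e \<in> {..<Suc m} \<rightarrow>\<^sub>E A"
      by (simp add: multichains_def)
    then show "?ext (?cut e) = e"
      by (simp add: lessThan_Suc)
    show "?cut e \<in> ?S"
      using e multichain_le[OF assms(2) e] by (auto simp: multichains_def)
  qed
  finally show ?thesis ..
qed

lemma multichain_gen_down_set_qexp_poly:
  assumes "finite P" and "reflp_on P le" and "transp_on P le"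
    and strict: "\<And>x y. x \<in> P \<Longrightarrow> y \<in> P \<Longrightarrow> le x y \<Longrightarrow> x \<noteq> y \<Longrightarrow> h x < h y"
    and "x \<in> P"
  shows "qexp_poly (Suc (h x)) (multichain_gen {z \<in> P. le z x} le h)"
  using \<open>x \<in> P\<close>
proof (induction "h x" arbitrary: x rule: less_induct)
  case less
  let ?D = "\<lambda>y. {z \<in> P. le z y}"
  have trans: "transp_on (?D x) le"
    using assms(3) by (rule transp_on_subset) blast
  have "x \<in> ?D x"
    using less.prems reflp_onD[OF assms(2)] by blast
  moreover have "{z \<in> ?D x. le z y} = ?D y" if "y \<in> ?D x" for y
    using that less.prems transp_onD[OF assms(3)] by blast
  ultimately have rec: "multichain_gen (?D x) le h (Suc m)
      = qvar ^ h x * multichain_gen (?D x) le h m + (\<Sum>y\<in>?D x - {x}. qvar ^ h y * multichain_gen (?D y) le h m)" for m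
    using assms(1) by (simp add: multichain_gen_Suc[OF _ trans] sum.remove)
  have "qexp_poly (h x) (\<lambda>m. \<Sum>y\<in>?D x - {x}. qvar ^ h y * multichain_gen (?D y) le h m)"
  proof (intro qexp_poly_sum qexp_poly_cmult)
    fix y assume "y \<in> ?D x - {x}"
    then have "y \<in> P" and "h y < h x"
      using less.prems strict by auto
    then show "qexp_poly (h x) (multichain_gen (?D y) le h)"
      using less.hyps qexp_poly_mono by (metis Suc_leI)
  qed
  then show ?case
    using rec by (rule qexp_poly_recurrence)
qed

lemma chain_gen_interpolation:
  assumes "finite_poset P le" and "height_function P le h"
  shows "\<exists>Z. \<forall>n\<ge>2. poly Z (qint n) = chain_gen P le h n"
proof -
  have fin: "finite P" and refl: "reflp_on P le" and trans: "transp_on P le"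
    using assms(1) by (auto simp: finite_poset_iff)
  have strict: "h x < h y" if "x \<in> P" "y \<in> P" "le x y" "x \<noteq> y" for x y
    using height_function_strict_mono[OF assms that] .
  have "qexp_poly (Suc (Max (h ` P))) (\<lambda>m. multichain_gen P le h (Suc m))"
    unfolding multichain_gen_Suc[OF fin trans]
  proof (intro qexp_poly_sum qexp_poly_cmult)
    fix x assume "x \<in> P"
    then have "qexp_poly (Suc (h x)) (multichain_gen {z \<in> P. le z x} le h)"
      using multichain_gen_down_set_qexp_poly[OF fin refl trans] strict by blast
    then show "qexp_poly (Suc (Max (h ` P))) (multichain_gen {z \<in> P. le z x} le h)"
      using fin \<open>x \<in> P\<close> by (elim qexp_poly_mono) simp
  qed
  then obtain Z where Z: "\<And>m. poly Z (qint (Suc (Suc m))) = multichain_gen P le h (Suc m)"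
    using qexp_poly_interpolation by blast
  have "poly Z (qint n) = chain_gen P le h n" if "n \<ge> 2" for n
    using that Z[of "n - 2"]
    by (simp add: chain_gen_eq_multichain_gen numeral_2_eq_2 Suc_diff_Suc)
  then show ?thesis
    by blast
qed

lemma poly_qZeta:
  assumes "finite_poset P le" and "height_function P le h" and "n \<ge> 2"
  shows "poly (qZeta P le h) (qint n) = chain_gen P le h n"
proof -
  obtain Z where Z: "\<forall>n\<ge>2. poly Z (qint n) = chain_gen P le h n"
    using chain_gen_interpolation[OF assms(1,2)] by blast
  then have "qZeta P le h = Z"
    by (intro qZeta_eqI) simp
  then show ?thesis
    using Z assms(3) by simp
qed

lemma multichain_gen_prod:
  "multichain_gen (P \<times> Q) (prod_le leP leQ) (\<lambda>(a, b). g a + h b) m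
    = multichain_gen P leP g m * multichain_gen Q leQ h m"
proof -
  let ?pair = "\<lambda>(a, b). restrict (\<lambda>i. (a i, b i)) {..<m}"
  let ?split = "\<lambda>e. (restrict (fst \<circ> e) {..<m}, restrict (snd \<circ> e) {..<m})"
  have "multichain_gen P leP g m * multichain_gen Q leQ h m
      = (\<Sum>(a, b)\<in>multichains P leP m \<times> multichains Q leQ m. qvar ^ (\<Sum>i<m. g (a i) + h (b i)))"
    unfolding multichain_gen_def sum_product sum.cartesian_product sum.distrib power_add ..
  also have "\<dots> = multichain_gen (P \<times> Q) (prod_le leP leQ) (\<lambda>(a, b). g a + h b) m"
    unfolding multichain_gen_def
  proof (rule sum.reindex_bij_witness[where j = ?pair and i = ?split])
    fix ab assume "ab \<in> multichains P leP m \<times> multichains Q leQ m"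
    then obtain a b where ab: "ab = (a, b)" "a \<in> multichains P leP m" "b \<in> multichains Q leQ m"
      by blast
    then have "a \<in> {..<m} \<rightarrow>\<^sub>E P" and "b \<in> {..<m} \<rightarrow>\<^sub>E Q"
      by (simp_all add: multichains_def)
    with ab show "?split (?pair ab) = ab"
      by (simp add: o_def cong: restrict_cong)
    show "?pair ab \<in> multichains (P \<times> Q) (prod_le leP leQ) m"
      using ab by (auto simp: multichains_def prod_le_def)
    show "qvar ^ (\<Sum>i<m. (\<lambda>(a, b). g a + h b) (?pair ab i))
        = (\<lambda>(a, b). qvar ^ (\<Sum>i<m. g (a i) + h (b i))) ab"
      using ab by simp
  next
    fix e assume e: "e \<in> multichains (P \<times> Q) (prod_le leP leQ) m"
    then have "e \<in> {..<m} \<rightarrow>\<^sub>E P \<times> Q"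
      by (simp add: multichains_def)
    then show "?pair (?split e) = e"
      by (simp cong: restrict_cong)
    show "?split e \<in> multichains P leP m \<times> multichains Q leQ m"
      using e by (auto simp: multichains_def prod_le_def PiE_iff mem_Times_iff)
  qed
  finally show ?thesis ..
qed

lemma multichain_Plus_same_side:
  assumes "e \<in> multichains (P <+> Q) (sum_le leP leQ) m" and "i < m"
  shows "isl (e i) = isl (e 0)"
  using assms(2)
proof (induction i)
  case (Suc i)
  then have "sum_le leP leQ (e i) (e (Suc i))"
    using assms(1) by (simp add: multichains_def)
  then show ?case
    using Suc by (cases "e i"; cases "e (Suc i)") auto
qed simp

lemma multichain_PlusE:
  assumes e: "e \<in> multichains (P <+> Q) (sum_le leP leQ) m"
  obtains (Inl) a where "a \<in> multichains P leP m" and "e = restrict (Inl \<circ> a) {..<m}"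
    | (Inr) b where "b \<in> multichains Q leQ m" and "e = restrict (Inr \<circ> b) {..<m}"
proof -
  have PiE: "e \<in> {..<m} \<rightarrow>\<^sub>E P <+> Q"
    and chain: "\<And>k. Suc k < m \<Longrightarrow> sum_le leP leQ (e k) (e (Suc k))"
    using e by (simp_all add: multichains_def)
  show thesis
  proof (cases "isl (e 0)")
    case True
    define a where "a = restrict (projl \<circ> e) {..<m}"
    have a: "e k = Inl (a k)" "a k \<in> P" if "k < m" for k
      using that multichain_Plus_same_side[OF e that] True PiE_mem[OF PiE, of k]
      by (auto simp: a_def)
    have "leP (a k) (a (Suc k))" if "Suc k < m" for k
      using chain[OF that] a(1)[of k] a(1)[of "Suc k"] that by simp
    then have "a \<in> multichains P leP m"
      using a(2) by (auto simp: multichains_def PiE_iff a_def)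
    moreover have "e = restrict (Inl \<circ> a) {..<m}"
      using a PiE_arb[OF PiE] by (auto simp: fun_eq_iff)
    ultimately show thesis
      by (rule that(1))
  next
    case False
    define b where "b = restrict (projr \<circ> e) {..<m}"
    have b: "e k = Inr (b k)" "b k \<in> Q" if "k < m" for k
      using that multichain_Plus_same_side[OF e that] False PiE_mem[OF PiE, of k]
      by (auto simp: b_def)
    have "leQ (b k) (b (Suc k))" if "Suc k < m" for k
      using chain[OF that] b(1)[of k] b(1)[of "Suc k"] that by simp
    then have "b \<in> multichains Q leQ m"
      using b(2) by (auto simp: multichains_def PiE_iff b_def)
    moreover have "e = restrict (Inr \<circ> b) {..<m}"
      using b PiE_arb[OF PiE] by (auto simp: fun_eq_iff)
    ultimately show thesis
      by (rule that(2))
  qed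
qed

(* For m = 0 the empty multichain is counted once on the left and twice on the right. *)
lemma multichain_gen_Plus:
  assumes "finite P" and "finite Q" and "m \<noteq> 0"
  shows "multichain_gen (P <+> Q) (sum_le leP leQ) (case_sum g h) m
    = multichain_gen P leP g m + multichain_gen Q leQ h m"
proof -
  let ?MP = "multichains P leP m" and ?MQ = "multichains Q leQ m"
  let ?lift = "case_sum (\<lambda>a. restrict (Inl \<circ> a) {..<m}) (\<lambda>b. restrict (Inr \<circ> b) {..<m})"
  let ?proj = "\<lambda>e. if isl (e 0) then Inl (restrict (projl \<circ> e) {..<m})
    else Inr (restrict (projr \<circ> e) {..<m})"
  let ?w = "case_sum (\<lambda>a. qvar ^ (\<Sum>i<m. g (a i))) (\<lambda>b. qvar ^ (\<Sum>i<m. h (b i)))"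
  have "multichain_gen P leP g m + multichain_gen Q leQ h m = (\<Sum>s\<in>?MP <+> ?MQ. ?w s)"
    by (simp add: sum.Plus assms(1,2) finite_multichains multichain_gen_def comp_def)
  also have "\<dots> = multichain_gen (P <+> Q) (sum_le leP leQ) (case_sum g h) m"
    unfolding multichain_gen_def
  proof (rule sum.reindex_bij_witness[where j = ?lift and i = ?proj])
    fix s assume "s \<in> ?MP <+> ?MQ"
    then show "?proj (?lift s) = s" and "?lift s \<in> multichains (P <+> Q) (sum_le leP leQ) m"
      and "qvar ^ (\<Sum>i<m. case_sum g h (?lift s i)) = ?w s"
      using assms(3) by (auto simp: multichains_def PiE_iff o_def cong: restrict_cong)
  next
    fix e assume "e \<in> multichains (P <+> Q) (sum_le leP leQ) m"
    then show "?lift (?proj e) = e" and "?proj e \<in> ?MP <+> ?MQ"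
      using assms(3)
      by (cases rule: multichain_PlusE; auto simp: multichains_def o_def cong: restrict_cong)+
  qed
  finally show ?thesis ..
qed

theorem mainTheorem11:
  fixes P :: "'a set" and leP :: "'a \<Rightarrow> 'a \<Rightarrow> bool" and g :: "'a \<Rightarrow> nat"
    and Q :: "'b set" and leQ :: "'b \<Rightarrow> 'b \<Rightarrow> bool" and h :: "'b \<Rightarrow> nat"
  assumes "finite_poset P leP" and "height_function P leP g"
    and "finite_poset Q leQ" and "height_function Q leQ h"
  shows "qZeta (P \<times> Q) (prod_le leP leQ) (\<lambda>(a, b). g a + h b) = qZeta P leP g * qZeta Q leQ h \<and>
         qZeta (P <+> Q) (sum_le leP leQ) (case_sum g h) = qZeta P leP g + qZeta Q leQ h"
proof
  have ZP: "poly (qZeta P leP g) (qint n) = chain_gen P leP g n" if "n \<ge> 2" for n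
    using assms(1,2) that by (rule poly_qZeta)
  have ZQ: "poly (qZeta Q leQ h) (qint n) = chain_gen Q leQ h n" if "n \<ge> 2" for n
    using assms(3,4) that by (rule poly_qZeta)
  have "finite P" and "finite Q"
    using assms(1,3) by (simp_all add: finite_poset_iff)
  show "qZeta (P \<times> Q) (prod_le leP leQ) (\<lambda>(a, b). g a + h b) = qZeta P leP g * qZeta Q leQ h"
    by (rule qZeta_eqI) (simp add: ZP ZQ chain_gen_eq_multichain_gen multichain_gen_prod)
  show "qZeta (P <+> Q) (sum_le leP leQ) (case_sum g h) = qZeta P leP g + qZeta Q leQ h"
    by (rule qZeta_eqI)
      (simp add: ZP ZQ chain_gen_eq_multichain_gen multichain_gen_Plus \<open>finite P\<close> \<open>finite Q\<close>)
qed

end
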